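(* Let $A$ be a finite-dimensional real algebra in which every subalgebra generated by a single element is associative, and let $(p^{[n]}(t))_{n\in\mathbb N}$, $p^{[n]}(t)=\sum_{k=0}^\infty a_k^{[n]}t^k$, be any sequence of real power series with $\sum_{k=0}^\infty|a_k^{[n]}|<\infty$ for each $n$ and $\lim_{n\to\infty}\sup\{|a_k^{[n]}|:k\ge1\}=0$. Put $p_0^{[n]}(t)=p^{[n]}(t)-a_0^{[n]}$. If $x\in A$ satisfies $\lim_{n\to\infty}x^n=0$, then $\lim_{n\to\infty}p_0^{[n]}(x)=0$, where $p_0^{[n]}(x)=\sum_{k\ge1}a_k^{[n]}x^k$.
   Context: $A$ carries the Euclidean topology of a finite-dimensional real vector space; powers $x^k$ are well defined by the one-generator associativity. The sequence $(p^{[n]})$ is arbitrary (not necessarily iterates of one series). *)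

theory Defs
  imports "HOL-Analysis.Analysis"
begin

text \<open>A (not necessarily associative, not necessarily unital) finite-dimensional real
algebra is modelled as a Euclidean space 'a together with a bilinear multiplication
mul :: 'a => 'a => 'a.\<close>

definition is_subalgebra :: "('a::real_vector \<Rightarrow> 'a \<Rightarrow> 'a) \<Rightarrow> 'a set \<Rightarrow> bool" where
  "is_subalgebra mul S \<longleftrightarrow> subspace S \<and> (\<forall>u\<in>S. \<forall>v\<in>S. mul u v \<in> S)"

definition gen_subalgebra :: "('a::real_vector \<Rightarrow> 'a \<Rightarrow> 'a) \<Rightarrow> 'a \<Rightarrow> 'a set" where
  "gen_subalgebra mul x = \<Inter> {S. is_subalgebra mul S \<and> x \<in> S}"

definition assoc_on :: "('a \<Rightarrow> 'a \<Rightarrow> 'a) \<Rightarrow> 'a set \<Rightarrow> bool" where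
  "assoc_on mul S \<longleftrightarrow> (\<forall>u\<in>S. \<forall>v\<in>S. \<forall>w\<in>S. mul (mul u v) w = mul u (mul v w))"

text \<open>Powers x^k for k >= 1 (x^1 = x, x^(k+1) = x * x^k); well defined (independent of
bracketing) under one-generator associativity. The value at k = 0 is a dummy (0) and is
never used in the statement.\<close>
fun alg_pow :: "('a::zero \<Rightarrow> 'a \<Rightarrow> 'a) \<Rightarrow> 'a \<Rightarrow> nat \<Rightarrow> 'a" where
  "alg_pow mul x 0 = 0"
| "alg_pow mul x (Suc 0) = x"
| "alg_pow mul x (Suc (Suc n)) = mul x (alg_pow mul x (Suc n))"

end

theory Submission
  imports Defs
begin

text \<open>Let the multiplication be bounded bilinear with constant K. Since x^n \<rightarrow> 0, some power
satisfies \<parallel>x^m\<parallel> \<le> 1/(2K); power associativity gives x^(j+m) = x^m x^j, so \<parallel>x^j\<parallel> halves every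
m steps and the series of the \<parallel>x^k\<parallel> converges. Hence the norm of p_0^[n](x) is at most
sup {\<bar>a_k^[n]\<bar> | k \<ge> 1} times the sum of the \<parallel>x^k\<parallel>, which tends to 0.\<close>

lemma geometric_bound_of_periodic_halving:
  fixes c :: "nat \<Rightarrow> real"
  assumes "m > 0" "B \<ge> 0"
    and halving: "\<And>j. c (j + m) \<le> c j / 2"
    and initial: "\<And>j. j < m \<Longrightarrow> c j \<le> B"
  shows "c j \<le> 2 * B * root m (1/2) ^ j"
proof (induction j rule: less_induct)
  case (less j)
  define r where "r = root m (1/2)"
  have r: "0 \<le> r" "r \<le> 1" "r ^ m = 1/2"
    using \<open>m > 0\<close> by (auto simp: r_def real_root_pow_pos2)
  show ?case
  proof (cases "j < m")
    case True
    then have "1/2 \<le> r ^ j"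
      using r power_decreasing[of j m r] by simp
    then have "B \<le> 2 * B * r ^ j"
      using mult_left_mono[of "1/2" "r ^ j" "2 * B"] \<open>B \<ge> 0\<close> by simp
    with initial[OF True] show ?thesis
      by (simp add: r_def)
  next
    case False
    then obtain i where j: "j = i + m"
      using le_Suc_ex not_less by (metis add.commute)
    have "c j \<le> c i / 2"
      using halving j by simp
    also have "\<dots> \<le> 2 * B * r ^ i * r ^ m"
      using less.IH[of i] j \<open>m > 0\<close> r(3) by (simp add: r_def)
    also have "\<dots> = 2 * B * r ^ j"
      by (simp add: j power_add)
    finally show ?thesis
      by (simp add: r_def)
  qed
qed

lemma summable_of_periodic_halving:
  fixes c :: "nat \<Rightarrow> real"
  assumes nonneg: "\<And>j. c j \<ge> 0" and "m > 0"
    and halving: "\<And>j. c (j + m) \<le> c j / 2"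
  shows "summable c"
proof -
  define B where "B = (\<Sum>j<m. c j)"
  have bound: "c j \<le> 2 * B * root m (1/2) ^ j" for j
  proof (rule geometric_bound_of_periodic_halving[where c = c, OF \<open>m > 0\<close> _ halving])
    show "B \<ge> 0"
      unfolding B_def by (simp add: nonneg sum_nonneg)
    show "c i \<le> B" if "i < m" for i
      unfolding B_def using that nonneg by (intro member_le_sum) auto
  qed
  have "summable (\<lambda>j. 2 * B * root m (1/2) ^ j)"
    using \<open>m > 0\<close> by (intro summable_mult summable_geometric) auto
  then show ?thesis
    by (rule summable_comparison_test') (use bound nonneg in auto)
qed

lemma alg_pow_mem_subalgebra:
  assumes "is_subalgebra mul S" "x \<in> S"
  shows "alg_pow mul x (Suc k) \<in> S"
  using assms by (induction k) (auto simp: is_subalgebra_def)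

lemma alg_pow_mem_gen_subalgebra: "alg_pow mul x (Suc k) \<in> gen_subalgebra mul x"
  unfolding gen_subalgebra_def using alg_pow_mem_subalgebra by blast

lemma alg_pow_add:
  assumes "assoc_on mul (gen_subalgebra mul x)"
  shows "alg_pow mul x (Suc m + Suc k) = mul (alg_pow mul x (Suc m)) (alg_pow mul x (Suc k))"
proof (induction m)
  case 0
  then show ?case by simp
next
  case (Suc m)
  have "alg_pow mul x (Suc (Suc m) + Suc k) = mul x (mul (alg_pow mul x (Suc m)) (alg_pow mul x (Suc k)))"
    using Suc by simp
  also have "\<dots> = mul (mul x (alg_pow mul x (Suc m))) (alg_pow mul x (Suc k))"
    using assms alg_pow_mem_gen_subalgebra[of mul x 0] alg_pow_mem_gen_subalgebra[of mul x m]
      alg_pow_mem_gen_subalgebra[of mul x k]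
    unfolding assoc_on_def by (metis alg_pow.simps(2))
  finally show ?case by simp
qed

lemma summable_norm_alg_pow:
  fixes mul :: "'a::real_normed_vector \<Rightarrow> 'a \<Rightarrow> 'a"
  assumes "bounded_bilinear mul"
    and assoc: "assoc_on mul (gen_subalgebra mul x)"
    and lim: "(\<lambda>n. alg_pow mul x n) \<longlonglongrightarrow> 0"
  shows "summable (\<lambda>k. norm (alg_pow mul x (Suc k)))"
proof -
  obtain K where "K > 0" and K: "\<And>u v. norm (mul u v) \<le> norm u * norm v * K"
    using bounded_bilinear.pos_bounded[OF assms(1)] by blast
  have "eventually (\<lambda>n. norm (alg_pow mul x n) < 1 / (2 * K)) sequentially"
    using lim \<open>K > 0\<close> by (simp add: tendsto_iff dist_norm)
  then obtain N where N: "\<And>n. n \<ge> N \<Longrightarrow> norm (alg_pow mul x n) < 1 / (2 * K)"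
    by (auto simp: eventually_sequentially)
  have small: "norm (alg_pow mul x (Suc N)) * K \<le> 1/2"
    using N[of "Suc N"] \<open>K > 0\<close> by (simp add: field_simps)
  show ?thesis
  proof (rule summable_of_periodic_halving[where m = "Suc N"])
    fix j
    have "alg_pow mul x (Suc (j + Suc N)) = mul (alg_pow mul x (Suc N)) (alg_pow mul x (Suc j))"
      using alg_pow_add[OF assoc, of N j] by (simp add: add.commute)
    then have "norm (alg_pow mul x (Suc (j + Suc N)))
        \<le> norm (alg_pow mul x (Suc N)) * norm (alg_pow mul x (Suc j)) * K"
      using K by metis
    also have "\<dots> = (norm (alg_pow mul x (Suc N)) * K) * norm (alg_pow mul x (Suc j))"
      by (simp add: ac_simps)
    also have "\<dots> \<le> 1/2 * norm (alg_pow mul x (Suc j))"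
      using small by (rule mult_right_mono) simp
    finally show "norm (alg_pow mul x (Suc (j + Suc N))) \<le> norm (alg_pow mul x (Suc j)) / 2"
      by simp
  qed auto
qed

lemma abs_le_SUP_of_summable:
  fixes a :: "nat \<Rightarrow> real"
  assumes "summable (\<lambda>k. \<bar>a k\<bar>)" "k \<in> A"
  shows "\<bar>a k\<bar> \<le> (SUP k\<in>A. \<bar>a k\<bar>)"
proof (rule cSUP_upper[OF \<open>k \<in> A\<close>])
  show "bdd_above ((\<lambda>k. \<bar>a k\<bar>) ` A)"
    using sum_le_suminf[OF assms(1), of "{_}"] by (intro bdd_aboveI2) auto
qed

lemma norm_suminf_scaleR_le:
  fixes v :: "nat \<Rightarrow> 'a::banach"
  assumes summ: "summable (\<lambda>k. norm (v k))" and coeff: "\<And>k. \<bar>b k\<bar> \<le> s"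
  shows "norm (\<Sum>k. b k *\<^sub>R v k) \<le> s * (\<Sum>k. norm (v k))"
proof -
  have le: "norm (b k *\<^sub>R v k) \<le> s * norm (v k)" for k
    using mult_right_mono[OF coeff[of k], of "norm (v k)"] by simp
  have summ_s: "summable (\<lambda>k. s * norm (v k))"
    using summ by (rule summable_mult)
  have summ_bv: "summable (\<lambda>k. norm (b k *\<^sub>R v k))"
    by (rule summable_comparison_test'[OF summ_s]) (use le in auto)
  have "norm (\<Sum>k. b k *\<^sub>R v k) \<le> (\<Sum>k. norm (b k *\<^sub>R v k))"
    by (rule summable_norm[OF summ_bv])
  also have "\<dots> \<le> (\<Sum>k. s * norm (v k))"
    by (rule suminf_le[OF le summ_bv summ_s])
  also have "\<dots> = s * (\<Sum>k. norm (v k))"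
    using suminf_mult[OF summ] by simp
  finally show ?thesis .
qed

theorem lemma1:
  fixes mul :: "'a::euclidean_space \<Rightarrow> 'a \<Rightarrow> 'a"
    and a :: "nat \<Rightarrow> nat \<Rightarrow> real"
    and x :: 'a
  assumes bil: "bilinear mul"
    and pa: "\<And>y. assoc_on mul (gen_subalgebra mul y)"
    and abs_summ: "\<And>n. summable (\<lambda>k. \<bar>a n k\<bar>)"
    and sup_lim: "(\<lambda>n. SUP k\<in>{1..}. \<bar>a n k\<bar>) \<longlonglongrightarrow> 0"
    and xlim: "(\<lambda>n. alg_pow mul x n) \<longlonglongrightarrow> 0"
  shows "(\<lambda>n. \<Sum>k. a n (Suc k) *\<^sub>R alg_pow mul x (Suc k)) \<longlonglongrightarrow> 0"
proof -
  define T where "T = (\<Sum>k. norm (alg_pow mul x (Suc k)))"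
  have summ: "summable (\<lambda>k. norm (alg_pow mul x (Suc k)))"
    using bil pa xlim by (intro summable_norm_alg_pow) (auto simp: bilinear_conv_bounded_bilinear)
  have bound: "norm (\<Sum>k. a n (Suc k) *\<^sub>R alg_pow mul x (Suc k)) \<le> (SUP k\<in>{1..}. \<bar>a n k\<bar>) * T" for n
    unfolding T_def
    by (rule norm_suminf_scaleR_le[OF summ]) (simp add: abs_le_SUP_of_summable[OF abs_summ])
  have "(\<lambda>n. (SUP k\<in>{1..}. \<bar>a n k\<bar>) * T) \<longlonglongrightarrow> 0"
    using sup_lim by (rule tendsto_mult_left_zero)
  then show ?thesis
    by (rule Lim_null_comparison[rotated]) (intro always_eventually allI bound)
qed

end
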